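(* Let $p$ be a prime, $m$ a positive integer, $q=p^m$ and $n=q-1$. For any integer $e$ with $1 \le e \le n-1$ and $\gcd(e, q-1)=2$, the size $\ell_e$ of the $p$-cyclotomic coset $C_e$ modulo $n$ is equal to $m$.
   Context: For $j\in\mathbb{Z}_n=\{0,1,\dots,n-1\}$, the $p$-cyclotomic coset modulo $n$ containing $j$ is $C_j=\{j, pj, p^2j,\dots,p^{\ell_j-1}j\}$ (computed modulo $n$), where $\ell_j$ is the smallest positive integer with $p^{\ell_j}j\equiv j \pmod n$; $\ell_j=|C_j|$ is called the size of $C_j$. *)

theory Defs
  imports "HOL-Number_Theory.Number_Theory"
begin

definition cyc_coset_size :: "nat \<Rightarrow> nat \<Rightarrow> nat \<Rightarrow> nat" where
  "cyc_coset_size p n j = (LEAST l. 0 < l \<and> [p ^ l * j = j] (mod n))"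

definition cyc_coset :: "nat \<Rightarrow> nat \<Rightarrow> nat \<Rightarrow> nat set" where
  "cyc_coset p n j = {(p ^ i * j) mod n | i. i < cyc_coset_size p n j}"

end

theory Submission
  imports Defs
begin

text \<open>Since \<open>p\<^sup>m \<equiv> 1 (mod n)\<close>, the size of \<open>C\<^sub>e\<close> is at most \<open>m\<close>. Conversely, if
  \<open>p\<^sup>y e \<equiv> e (mod n)\<close>, cancelling \<open>gcd e n = 2\<close> gives \<open>n/2 | p\<^sup>y - 1\<close>; for \<open>0 < y < m\<close>
  this is impossible because \<open>0 < p\<^sup>y - 1 \<le> p\<^sup>m\<^sup>-\<^sup>1 - 1 < (p\<^sup>m - 1)/2\<close>.\<close>

lemma cyc_coset_size_eqI:
  assumes "0 < l" "[p ^ l * j = j] (mod n)"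
    and "\<And>y. 0 < y \<Longrightarrow> [p ^ y * j = j] (mod n) \<Longrightarrow> l \<le> y"
  shows "cyc_coset_size p n j = l"
  unfolding cyc_coset_size_def using assms by (intro Least_equality) auto

lemma dvd_diff_one_if_cong_mult_self:
  fixes a e n :: nat
  assumes "[a * e = e] (mod n)" "1 \<le> a" "0 < n"
  shows "n div gcd n e dvd a - 1"
proof -
  define g where "g = gcd n e"
  obtain n' e' where n': "n = g * n'" and e': "e = g * e'"
    unfolding g_def by (meson gcd_dvd1 gcd_dvd2 dvdE)
  have "0 < g" using assms(3) unfolding g_def by simp
  have "n dvd (a - 1) * e"
    using assms(1,2) cong_altdef_nat[of e "a * e" n] by (simp add: diff_mult_distrib)
  then have "n' dvd (a - 1) * e'"
    using \<open>0 < g\<close> by (simp add: n' e' mult.left_commute)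
  moreover have "coprime (n div g) (e div g)"
    unfolding g_def using assms(3) by (intro div_gcd_coprime) simp
  then have "coprime n' e'"
    using \<open>0 < g\<close> by (simp add: n' e')
  ultimately have "n' dvd a - 1"
    by (simp add: coprime_dvd_mult_left_iff)
  moreover have "n div g = n'"
    using \<open>0 < g\<close> by (simp add: n')
  ultimately show ?thesis
    by (simp add: g_def)
qed

lemma two_mult_pow_diff_one_less:
  fixes p y m :: nat
  assumes "2 \<le> p" "y < m"
  shows "2 * (p ^ y - 1) < p ^ m - 1"
proof -
  have "2 * p ^ y \<le> p * p ^ (m - 1)"
    using assms by (intro mult_le_mono power_increasing) auto
  also have "\<dots> = p ^ m"
    using assms(2) by (cases m) auto
  finally show ?thesis
    using one_le_power[of p y] assms(1) by linarith
qed

theorem lemma1: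
  fixes p m q n e :: nat
  assumes "prime p" and "0 < m" and "q = p ^ m" and "n = q - 1"
    and "1 \<le> e" and "e \<le> n - 1" and "gcd e (q - 1) = 2"
  shows "cyc_coset_size p n e = m"
proof (rule cyc_coset_size_eqI)
  have p2: "2 \<le> p" using assms(1) prime_ge_2_nat by blast
  then have n_pos: "0 < n" and "p ^ m = n + 1"
    using assms(2-4) one_less_power[of p m] by auto
  then show "[p ^ m * e = e] (mod n)"
    by (simp add: cong_def algebra_simps)
  show "0 < m" by fact
  fix y assume "0 < y" and cong: "[p ^ y * e = e] (mod n)"
  have "even n"
    using assms(4,7) by (metis gcd_dvd2)
  then have "n = 2 * (n div 2)" by simp
  have "n div 2 dvd p ^ y - 1"
    using dvd_diff_one_if_cong_mult_self[OF cong _ n_pos] assms(4,7) p2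
    by (simp add: gcd.commute)
  moreover have "0 < p ^ y - 1"
    using p2 \<open>0 < y\<close> one_less_power[of p y] by simp
  ultimately have "n div 2 \<le> p ^ y - 1" by (rule dvd_imp_le)
  show "m \<le> y"
  proof (rule ccontr)
    assume "\<not> m \<le> y"
    then have "2 * (p ^ y - 1) < n"
      using two_mult_pow_diff_one_less[OF p2, of y m] assms(3,4) by simp
    with \<open>n div 2 \<le> p ^ y - 1\<close> \<open>n = 2 * (n div 2)\<close> show False by linarith
  qed
qed

end
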